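(* Let $f_i$ and $f_j$ be finite set densities on finite subsets of $\mathbb{R}^d$ with cardinality pmfs $p_i,p_j$ and localisation densities $\rho_{i,n},\rho_{j,n}$, let $\omega\in[0,1]$, and let $f_\omega$, $\tilde f_\omega$, $\tilde p_\omega$, $z_\omega(n)$ be as in the context. Let $X=\{x_1,\ldots,x_n\}$ be a finite subset of $\mathbb{R}^d$ with $f_\omega(X)>0$ and $z_\omega(n)>0$. Then $\tilde f_\omega$ is pointwise inconsistent at $X$, i.e. $$\tilde f_\omega(X)<\min\{f_i(X),f_j(X)\},$$ if $$\frac{E_{\tilde p_\omega}\{z_\omega(n)\}}{z_\omega(n)}<\frac{\min\{f_i(X),f_j(X)\}}{f_\omega(X)},$$ where $E_{\tilde p_\omega}\{z_\omega(n)\}=\sum_{n'=0}^\infty\tilde p_\omega(n')z_\omega(n')$; moreover, $\frac{\min\{f_i(X),f_j(X)\}}{f_\omega(X)}\le1$.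
   Context: A finite set density is written $f(\{x_1,\ldots,x_n\})=p(n)\,n!\,\rho_n(x_1,\ldots,x_n)$ with $p$ a pmf on $\{0,1,\ldots\}$ and $\rho_n$ a symmetric probability density on $(\mathbb{R}^d)^n$. For $\omega\in[0,1]$ define $z_\omega(0)=1$, $z_\omega(n)=\int\rho_{i,n}^{1-\omega}\rho_{j,n}^{\omega}\,\mathrm{d}x_1\cdots\mathrm{d}x_n$, $\rho_{\omega,n}=\rho_{i,n}^{1-\omega}\rho_{j,n}^{\omega}/z_\omega(n)$, $N_\omega=\sum_{n'}p_i^{1-\omega}(n')p_j^{\omega}(n')z_\omega(n')$, $p_\omega(n)=p_i^{1-\omega}(n)p_j^{\omega}(n)z_\omega(n)/N_\omega$. The finite set exponential mixture density is $f_\omega(X)=p_\omega(n)\,n!\,\rho_{\omega,n}(x_1,\ldots,x_n)$. Define $\tilde N_\omega=\sum_{n'}p_i^{1-\omega}(n')p_j^{\omega}(n')$, $\tilde p_\omega(n)=p_i^{1-\omega}(n)p_j^{\omega}(n)/\tilde N_\omega$ (the exponential mixture of the cardinality pmfs), and the decoupled fused density $\tilde f_\omega(X)=\tilde p_\omega(n)\,n!\,\rho_{\omega,n}(x_1,\ldots,x_n)$, where $n=|X|$. *)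

theory Defs
  imports "HOL-Probability.Probability"
begin

text \<open>Real power with the convention 0^0 = 1 (so that the exponential mixture
  at omega = 0 or 1 reproduces f_i resp. f_j).\<close>
definition pw :: "real \<Rightarrow> real \<Rightarrow> real" where
  "pw x a = (if a = 0 then 1 else x powr a)"

abbreviation tuple_measure :: "nat \<Rightarrow> (nat \<Rightarrow> 'a::euclidean_space) measure" where
  "tuple_measure n \<equiv> PiM {..<n} (\<lambda>_. lborel)"

definition loc_densities :: "(nat \<Rightarrow> (nat \<Rightarrow> 'a::euclidean_space) \<Rightarrow> real) \<Rightarrow> bool" where
  "loc_densities \<rho> \<longleftrightarrow> (\<forall>n.
      \<rho> n \<in> borel_measurable (tuple_measure n)
    \<and> (\<forall>x \<in> space (tuple_measure n). 0 \<le> \<rho> n x)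
    \<and> integrable (tuple_measure n) (\<rho> n)
    \<and> integral\<^sup>L (tuple_measure n) (\<rho> n) = 1
    \<and> (\<forall>\<sigma> x. \<sigma> permutes {..<n} \<longrightarrow> x \<in> space (tuple_measure n) \<longrightarrow>
          \<rho> n (restrict (x \<circ> \<sigma>) {..<n}) = \<rho> n x))"

text \<open>Finite set density f({x_1..x_n}) = p(n) n! rho_n(x_1..x_n).\<close>
definition fsd :: "nat pmf \<Rightarrow> (nat \<Rightarrow> (nat \<Rightarrow> 'a) \<Rightarrow> real) \<Rightarrow> nat \<Rightarrow> (nat \<Rightarrow> 'a) \<Rightarrow> real" where
  "fsd p \<rho> n x = pmf p n * fact n * \<rho> n x"

definition z_om :: "real \<Rightarrow> (nat \<Rightarrow> (nat \<Rightarrow> 'a::euclidean_space) \<Rightarrow> real)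
    \<Rightarrow> (nat \<Rightarrow> (nat \<Rightarrow> 'a) \<Rightarrow> real) \<Rightarrow> nat \<Rightarrow> real" where
  "z_om \<omega> \<rho>i \<rho>j n = (if n = 0 then 1 else
     integral\<^sup>L (tuple_measure n) (\<lambda>x. pw (\<rho>i n x) (1 - \<omega>) * pw (\<rho>j n x) \<omega>))"

definition rho_om :: "real \<Rightarrow> (nat \<Rightarrow> (nat \<Rightarrow> 'a::euclidean_space) \<Rightarrow> real)
    \<Rightarrow> (nat \<Rightarrow> (nat \<Rightarrow> 'a) \<Rightarrow> real) \<Rightarrow> nat \<Rightarrow> (nat \<Rightarrow> 'a) \<Rightarrow> real" where
  "rho_om \<omega> \<rho>i \<rho>j n x = pw (\<rho>i n x) (1 - \<omega>) * pw (\<rho>j n x) \<omega> / z_om \<omega> \<rho>i \<rho>j n"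

definition N_om :: "real \<Rightarrow> nat pmf \<Rightarrow> nat pmf \<Rightarrow> (nat \<Rightarrow> (nat \<Rightarrow> 'a::euclidean_space) \<Rightarrow> real)
    \<Rightarrow> (nat \<Rightarrow> (nat \<Rightarrow> 'a) \<Rightarrow> real) \<Rightarrow> real" where
  "N_om \<omega> pI pJ \<rho>i \<rho>j =
     (\<Sum>n'. pw (pmf pI n') (1 - \<omega>) * pw (pmf pJ n') \<omega> * z_om \<omega> \<rho>i \<rho>j n')"

definition p_om :: "real \<Rightarrow> nat pmf \<Rightarrow> nat pmf \<Rightarrow> (nat \<Rightarrow> (nat \<Rightarrow> 'a::euclidean_space) \<Rightarrow> real)
    \<Rightarrow> (nat \<Rightarrow> (nat \<Rightarrow> 'a) \<Rightarrow> real) \<Rightarrow> nat \<Rightarrow> real" where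
  "p_om \<omega> pI pJ \<rho>i \<rho>j n =
     pw (pmf pI n) (1 - \<omega>) * pw (pmf pJ n) \<omega> * z_om \<omega> \<rho>i \<rho>j n / N_om \<omega> pI pJ \<rho>i \<rho>j"

definition f_om :: "real \<Rightarrow> nat pmf \<Rightarrow> nat pmf \<Rightarrow> (nat \<Rightarrow> (nat \<Rightarrow> 'a::euclidean_space) \<Rightarrow> real)
    \<Rightarrow> (nat \<Rightarrow> (nat \<Rightarrow> 'a) \<Rightarrow> real) \<Rightarrow> nat \<Rightarrow> (nat \<Rightarrow> 'a) \<Rightarrow> real" where
  "f_om \<omega> pI pJ \<rho>i \<rho>j n x = p_om \<omega> pI pJ \<rho>i \<rho>j n * fact n * rho_om \<omega> \<rho>i \<rho>j n x"

definition Nt_om :: "real \<Rightarrow> nat pmf \<Rightarrow> nat pmf \<Rightarrow> real" where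
  "Nt_om \<omega> pI pJ = (\<Sum>n'. pw (pmf pI n') (1 - \<omega>) * pw (pmf pJ n') \<omega>)"

definition pt_om :: "real \<Rightarrow> nat pmf \<Rightarrow> nat pmf \<Rightarrow> nat \<Rightarrow> real" where
  "pt_om \<omega> pI pJ n = pw (pmf pI n) (1 - \<omega>) * pw (pmf pJ n) \<omega> / Nt_om \<omega> pI pJ"

definition ft_om :: "real \<Rightarrow> nat pmf \<Rightarrow> nat pmf \<Rightarrow> (nat \<Rightarrow> (nat \<Rightarrow> 'a::euclidean_space) \<Rightarrow> real)
    \<Rightarrow> (nat \<Rightarrow> (nat \<Rightarrow> 'a) \<Rightarrow> real) \<Rightarrow> nat \<Rightarrow> (nat \<Rightarrow> 'a) \<Rightarrow> real" where
  "ft_om \<omega> pI pJ \<rho>i \<rho>j n x = pt_om \<omega> pI pJ n * fact n * rho_om \<omega> \<rho>i \<rho>j n x"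

end

theory Submission
  imports Defs
begin

text \<open>Write G(u, v) for the weighted geometric mean u^(1-omega) v^omega. Both f_omega and the
  decoupled density share the numerator G(p_i(n), p_j(n)) n! G(rho_i(x), rho_j(x)); they differ
  only in the normaliser, N_omega for f_omega and Nt_omega z_omega(n) for the decoupled one, and
  N_omega / Nt_omega is exactly the expectation of z_omega under the mixed cardinality pmf. For the bound on min(f_i, f_j) / f_omega: G lies between
  the minimum and the arithmetic mean of its arguments, so z_omega(n) \<le> 1 and hence
  N_omega \<le> Nt_omega \<le> 1, while G(f_i(X), f_j(X)) \<ge> min(f_i(X), f_j(X)); since
  f_omega(X) = G(f_i(X), f_j(X)) / N_omega the bound follows.\<close>

lemma pmf_sums_one: "(\<lambda>n. pmf (p :: nat pmf) n) sums 1"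
proof -
  have "pmf p sums infsetsum (pmf p) UNIV"
    by (rule sums_infsetsum_nat'[OF pmf_abs_summable])
  thus ?thesis by (simp add: infsetsum_pmf_eq_1)
qed

lemma loc_densities_nonneg:
  assumes "loc_densities \<rho>" "x \<in> {..<n} \<rightarrow>\<^sub>E UNIV"
  shows "0 \<le> \<rho> n x"
  using assms by (auto simp: loc_densities_def space_PiM)

lemma pw_nonneg: "0 \<le> pw u a"
  by (simp add: pw_def)

lemma pw_mult:
  fixes u v a :: real
  assumes "0 \<le> u" "0 \<le> v"
  shows "pw (u * v) a = pw u a * pw v a"
  using assms by (simp add: pw_def powr_mult)

lemma pw_complementary_exponents:
  fixes c \<omega> :: real
  assumes "0 < c"
  shows "pw c (1 - \<omega>) * pw c \<omega> = c"
  using assms by (auto simp: pw_def simp flip: powr_add)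

lemma pw_geometric_mean_le_arithmetic_mean:
  fixes u v \<omega> :: real
  assumes "0 \<le> u" "0 \<le> v" "0 \<le> \<omega>" "\<omega> \<le> 1"
  shows "pw u (1 - \<omega>) * pw v \<omega> \<le> (1 - \<omega>) * u + \<omega> * v"
proof (cases "\<omega> = 0 \<or> \<omega> = 1 \<or> u = 0 \<or> v = 0")
  case True
  then show ?thesis using assms by (auto simp: pw_def)
next
  case False
  then show ?thesis using assms Youngs_inequality_0[of "1 - \<omega>" \<omega> u v]
    by (auto simp: pw_def)
qed

lemma min_le_pw_geometric_mean:
  fixes u v \<omega> :: real
  assumes "0 \<le> u" "0 \<le> v" "0 \<le> \<omega>" "\<omega> \<le> 1"
  shows "min u v \<le> pw u (1 - \<omega>) * pw v \<omega>"
proof (cases "\<omega> = 0 \<or> \<omega> = 1 \<or> min u v = 0")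
  case True
  then show ?thesis using assms by (auto simp: pw_def)
next
  case False
  hence "0 < \<omega>" "\<omega> < 1" "0 < min u v" using assms by auto
  hence "min u v = pw (min u v) (1 - \<omega>) * pw (min u v) \<omega>"
    by (simp add: pw_complementary_exponents)
  also have "\<dots> \<le> pw u (1 - \<omega>) * pw v \<omega>"
    using \<open>0 < \<omega>\<close> \<open>\<omega> < 1\<close> \<open>0 < min u v\<close>
    by (auto simp: pw_def intro!: mult_mono powr_mono2)
  finally show ?thesis .
qed

lemma z_om_nonneg: "0 \<le> z_om \<omega> \<rho>i \<rho>j n"
  by (auto simp: z_om_def pw_nonneg intro!: Bochner_Integration.integral_nonneg)

lemma z_om_le_one:
  assumes "loc_densities \<rho>i" "loc_densities \<rho>j" "0 \<le> \<omega>" "\<omega> \<le> 1"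
  shows "z_om \<omega> \<rho>i \<rho>j n \<le> 1"
proof (cases "n = 0")
  case True then show ?thesis by (simp add: z_om_def)
next
  case False
  let ?M = "tuple_measure n :: (nat \<Rightarrow> 'a) measure"
  let ?g = "\<lambda>x. pw (\<rho>i n x) (1 - \<omega>) * pw (\<rho>j n x) \<omega>"
  have "integrable ?M (\<rho>i n)" "integral\<^sup>L ?M (\<rho>i n) = 1"
       "integrable ?M (\<rho>j n)" "integral\<^sup>L ?M (\<rho>j n) = 1"
       and nonneg: "\<And>y. y \<in> space ?M \<Longrightarrow> 0 \<le> \<rho>i n y \<and> 0 \<le> \<rho>j n y"
    using assms(1,2) unfolding loc_densities_def by blast+
  have "integral\<^sup>L ?M ?g \<le> 1"
  proof (cases "integrable ?M ?g")
    case True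
    have "integral\<^sup>L ?M ?g \<le> integral\<^sup>L ?M (\<lambda>x. (1 - \<omega>) * \<rho>i n x + \<omega> * \<rho>j n x)"
    proof (rule integral_mono[OF True])
      show "integrable ?M (\<lambda>x. (1 - \<omega>) * \<rho>i n x + \<omega> * \<rho>j n x)"
        using \<open>integrable ?M (\<rho>i n)\<close> \<open>integrable ?M (\<rho>j n)\<close> by simp
      show "?g y \<le> (1 - \<omega>) * \<rho>i n y + \<omega> * \<rho>j n y" if "y \<in> space ?M" for y
        using nonneg[OF that] assms(3,4) by (intro pw_geometric_mean_le_arithmetic_mean) auto
    qed
    also have "\<dots> = 1"
      using \<open>integrable ?M (\<rho>i n)\<close> \<open>integrable ?M (\<rho>j n)\<close>
        \<open>integral\<^sup>L ?M (\<rho>i n) = 1\<close> \<open>integral\<^sup>L ?M (\<rho>j n) = 1\<close> by simp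
    finally show ?thesis .
  qed (simp add: not_integrable_integral_eq)
  with False show ?thesis by (simp add: z_om_def)
qed

lemma summable_pmf_geometric_mean:
  assumes "0 \<le> \<omega>" "\<omega> \<le> 1"
  shows "summable (\<lambda>k. pw (pmf pI k) (1 - \<omega>) * pw (pmf pJ k) \<omega>)"
proof (rule summable_comparison_test'[OF sums_summable[OF sums_add[OF sums_mult sums_mult]]])
  show "norm (pw (pmf pI k) (1 - \<omega>) * pw (pmf pJ k) \<omega>) \<le> (1 - \<omega>) * pmf pI k + \<omega> * pmf pJ k"
    for k using assms by (simp add: pw_nonneg pw_geometric_mean_le_arithmetic_mean)
qed (rule pmf_sums_one)+

lemma Nt_om_le_one:
  assumes "0 \<le> \<omega>" "\<omega> \<le> 1"
  shows "Nt_om \<omega> pI pJ \<le> 1"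
proof -
  have b_sums: "(\<lambda>k. (1 - \<omega>) * pmf pI k + \<omega> * pmf pJ k) sums ((1 - \<omega>) * 1 + \<omega> * 1)"
    by (intro sums_add sums_mult pmf_sums_one)
  have "Nt_om \<omega> pI pJ \<le> (\<Sum>k. (1 - \<omega>) * pmf pI k + \<omega> * pmf pJ k)"
    unfolding Nt_om_def
  proof (rule suminf_le[OF _ summable_pmf_geometric_mean[OF assms] sums_summable[OF b_sums]])
    show "pw (pmf pI k) (1 - \<omega>) * pw (pmf pJ k) \<omega> \<le> (1 - \<omega>) * pmf pI k + \<omega> * pmf pJ k"
      for k using assms by (simp add: pw_geometric_mean_le_arithmetic_mean)
  qed
  with b_sums show ?thesis by (simp add: sums_iff)
qed

lemma summable_N_om_terms:
  assumes "loc_densities \<rho>i" "loc_densities \<rho>j" "0 \<le> \<omega>" "\<omega> \<le> 1"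
  shows "summable (\<lambda>k. pw (pmf pI k) (1 - \<omega>) * pw (pmf pJ k) \<omega> * z_om \<omega> \<rho>i \<rho>j k)"
proof (rule summable_comparison_test'[OF summable_pmf_geometric_mean[OF assms(3,4)]])
  show "norm (pw (pmf pI k) (1 - \<omega>) * pw (pmf pJ k) \<omega> * z_om \<omega> \<rho>i \<rho>j k)
          \<le> pw (pmf pI k) (1 - \<omega>) * pw (pmf pJ k) \<omega>" for k
    using z_om_le_one[OF assms, of k] z_om_nonneg[of \<omega> \<rho>i \<rho>j k]
    by (simp add: pw_nonneg mult_left_le)
qed

lemma N_om_nonneg:
  assumes "loc_densities \<rho>i" "loc_densities \<rho>j" "0 \<le> \<omega>" "\<omega> \<le> 1"
  shows "0 \<le> N_om \<omega> pI pJ \<rho>i \<rho>j"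
  unfolding N_om_def
  by (rule suminf_nonneg[OF summable_N_om_terms[OF assms]]) (simp add: pw_nonneg z_om_nonneg)

lemma N_om_le_Nt_om:
  assumes "loc_densities \<rho>i" "loc_densities \<rho>j" "0 \<le> \<omega>" "\<omega> \<le> 1"
  shows "N_om \<omega> pI pJ \<rho>i \<rho>j \<le> Nt_om \<omega> pI pJ"
  unfolding N_om_def Nt_om_def
proof (rule suminf_le[OF _ summable_N_om_terms[OF assms] summable_pmf_geometric_mean[OF assms(3,4)]])
  show "pw (pmf pI k) (1 - \<omega>) * pw (pmf pJ k) \<omega> * z_om \<omega> \<rho>i \<rho>j k
          \<le> pw (pmf pI k) (1 - \<omega>) * pw (pmf pJ k) \<omega>" for k
    using z_om_le_one[OF assms, of k] by (simp add: pw_nonneg mult_left_le)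
qed

lemma suminf_pt_om_z_om:
  assumes "loc_densities \<rho>i" "loc_densities \<rho>j" "0 \<le> \<omega>" "\<omega> \<le> 1"
  shows "(\<Sum>k. pt_om \<omega> pI pJ k * z_om \<omega> \<rho>i \<rho>j k) = N_om \<omega> pI pJ \<rho>i \<rho>j / Nt_om \<omega> pI pJ"
  using suminf_divide[OF summable_N_om_terms[OF assms], where c = "Nt_om \<omega> pI pJ"]
  by (simp add: pt_om_def N_om_def)

lemma f_om_eq_geometric_mean_fsd:
  assumes "z_om \<omega> \<rho>i \<rho>j n \<noteq> 0" "0 \<le> \<rho>i n x" "0 \<le> \<rho>j n x"
  shows "f_om \<omega> pI pJ \<rho>i \<rho>j n x
           = pw (fsd pI \<rho>i n x) (1 - \<omega>) * pw (fsd pJ \<rho>j n x) \<omega> / N_om \<omega> pI pJ \<rho>i \<rho>j"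
proof -
  have "pw (fsd pI \<rho>i n x) (1 - \<omega>) * pw (fsd pJ \<rho>j n x) \<omega>
        = pw (pmf pI n) (1 - \<omega>) * pw (pmf pJ n) \<omega>
          * (pw (fact n) (1 - \<omega>) * pw (fact n) \<omega>) * (pw (\<rho>i n x) (1 - \<omega>) * pw (\<rho>j n x) \<omega>)"
    using assms(2,3) by (simp add: fsd_def pw_mult)
  also have "pw (fact n) (1 - \<omega>) * pw (fact n) \<omega> = (fact n :: real)"
    by (simp add: pw_complementary_exponents)
  finally show ?thesis
    using assms(1) by (simp add: f_om_def p_om_def rho_om_def)
qed

lemma ft_om_eq_rescaled_f_om:
  assumes "z_om \<omega> \<rho>i \<rho>j n \<noteq> 0" "N_om \<omega> pI pJ \<rho>i \<rho>j \<noteq> 0"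
  shows "ft_om \<omega> pI pJ \<rho>i \<rho>j n x
           = f_om \<omega> pI pJ \<rho>i \<rho>j n x * (N_om \<omega> pI pJ \<rho>i \<rho>j / Nt_om \<omega> pI pJ / z_om \<omega> \<rho>i \<rho>j n)"
  using assms by (simp add: ft_om_def f_om_def pt_om_def p_om_def)

theorem proposition3:
  fixes pI pJ :: "nat pmf"
    and \<rho>i \<rho>j :: "nat \<Rightarrow> (nat \<Rightarrow> 'a::euclidean_space) \<Rightarrow> real"
    and \<omega> :: real and n :: nat and x :: "nat \<Rightarrow> 'a"
  assumes "loc_densities \<rho>i" and "loc_densities \<rho>j"
    and "0 \<le> \<omega>" and "\<omega> \<le> 1"
    and "x \<in> {..<n} \<rightarrow>\<^sub>E UNIV" and "inj_on x {..<n}"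
    and "f_om \<omega> pI pJ \<rho>i \<rho>j n x > 0"
    and "z_om \<omega> \<rho>i \<rho>j n > 0"
  shows "((\<Sum>n'. pt_om \<omega> pI pJ n' * z_om \<omega> \<rho>i \<rho>j n') / z_om \<omega> \<rho>i \<rho>j n
            < min (fsd pI \<rho>i n x) (fsd pJ \<rho>j n x) / f_om \<omega> pI pJ \<rho>i \<rho>j n x
         \<longrightarrow> ft_om \<omega> pI pJ \<rho>i \<rho>j n x < min (fsd pI \<rho>i n x) (fsd pJ \<rho>j n x))
       \<and> min (fsd pI \<rho>i n x) (fsd pJ \<rho>j n x) / f_om \<omega> pI pJ \<rho>i \<rho>j n x \<le> 1"
proof -
  let ?f = "f_om \<omega> pI pJ \<rho>i \<rho>j n x" and ?z = "z_om \<omega> \<rho>i \<rho>j n"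
  let ?N = "N_om \<omega> pI pJ \<rho>i \<rho>j"
  let ?m = "min (fsd pI \<rho>i n x) (fsd pJ \<rho>j n x)"
  let ?G = "pw (fsd pI \<rho>i n x) (1 - \<omega>) * pw (fsd pJ \<rho>j n x) \<omega>"
  have \<rho>_nonneg: "0 \<le> \<rho>i n x" "0 \<le> \<rho>j n x"
    using assms(1,2,5) by (auto intro: loc_densities_nonneg)
  have f_eq: "?f = ?G / ?N"
    using assms(8) \<rho>_nonneg by (intro f_om_eq_geometric_mean_fsd) auto
  have N_pos: "0 < ?N"
    using N_om_nonneg[OF assms(1-4), of pI pJ] assms(7) f_eq by (cases "?N = 0") auto
  have ft_eq: "ft_om \<omega> pI pJ \<rho>i \<rho>j n x
                 = ?f * ((\<Sum>k. pt_om \<omega> pI pJ k * z_om \<omega> \<rho>i \<rho>j k) / ?z)"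
    using ft_om_eq_rescaled_f_om[of \<omega> \<rho>i \<rho>j n pI pJ x] assms(8) N_pos
    by (simp add: suminf_pt_om_z_om[OF assms(1-4)])
  have "?m \<le> ?G"
    using \<rho>_nonneg assms(3,4) by (intro min_le_pw_geometric_mean) (auto simp: fsd_def)
  also have "?G \<le> ?G / ?N"
    using N_pos N_om_le_Nt_om[OF assms(1-4), of pI pJ] Nt_om_le_one[OF assms(3,4), of pI pJ]
    by (simp add: le_divide_eq mult_left_le pw_nonneg)
  finally have "?m \<le> ?f" using f_eq by simp
  with ft_eq assms(7) show ?thesis
    by (simp add: pos_less_divide_eq mult.commute)
qed

end
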